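(* Let $X_1$ be a positive random variable distributed as $X$, where $\mathbb{E}X=1$, and let $p\ge2$ be an integer. If $\mathbb{P}\{X\ge x\}=o(x^{-p-1})$ as $x\to\infty$, then $$\mathbb{E}\frac{X_1^{2p}}{\left(\frac1nX_1+1\right)^p}=o(n^{p-1})\quad(n\to\infty).$$ In addition, if $\mathbb{P}\{X\ge x\}=O(x^{-q})$ as $x\to\infty$ for some real $q$ with $p<q<2p$, then $$\mathbb{E}\frac{X_1^{2p}}{\left(\frac1nX_1+1\right)^p}=O(n^{2p-q}).$$ *)

theory Defs
  imports "HOL-Probability.Probability" "HOL-Library.Landau_Symbols"
begin

end

theory Submission
  imports Defs
begin

text \<open>
  For \<open>x \<ge> 0\<close> the ratio \<open>x^(2p) / (x/n + 1)^p\<close> is at most \<open>g\<^sub>n(x) = min (x^(2p)) (n^p x^p)\<close>.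
  As \<open>g\<^sub>n\<close> is nondecreasing with \<open>g\<^sub>n(0) = 0\<close>, writing \<open>g\<^sub>n(X)\<close> as a telescoping sum of its
  increments over the integers \<open>k \<le> X\<close> gives
  \<open>E g\<^sub>n(X) \<le> \<Sum>\<^sub>k (g\<^sub>n(k+1) - g\<^sub>n(k)) P(X \<ge> k)\<close>.
  Suppose \<open>P(X \<ge> k) \<le> B k^(-r)\<close> for \<open>k \<ge> K\<close>, where \<open>p < r < 2p\<close>. The terms with \<open>k < K\<close> add
  up to at most \<open>K^(2p)\<close>. For \<open>K \<le> k < n\<close> the increment is \<open>(k+1)^(2p) - k^(2p)\<close>, and the terms
  are dominated by the increments of \<open>k^(2p-r)\<close>. For \<open>k \<ge> n\<close> it is \<open>n^p ((k+1)^p - k^p)\<close>, and the terms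
  are dominated by \<open>n^p\<close> times the decrements of \<open>k^(p-r)\<close>. Both telescope to \<open>O(B n^(2p-r))\<close>, with a
  constant that does not depend on \<open>B\<close>, so a tail that is \<open>o(x^(-r))\<close> gives \<open>o(n^(2p-r))\<close>.
  Taking \<open>r = p + 1\<close> gives the first claim (this needs \<open>p \<ge> 2\<close>).
\<close>

lemma power_Suc_diff_le:
  fixes x :: real
  assumes "1 \<le> x"
  shows "(x + 1) ^ m - x ^ m \<le> real m * 2 ^ (m - 1) * x ^ (m - 1)"
proof -
  have "\<And>y. ((\<lambda>z. z ^ m) has_real_derivative real m * y ^ (m - 1)) (at y)"
    using DERIV_pow by simp
  from MVT2[of x "x + 1", OF _ this] obtain z where z: "x < z" "z < x + 1"
    and diff: "(x + 1) ^ m - x ^ m = real m * z ^ (m - 1)"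
    by auto
  have "z ^ (m - 1) \<le> (2 * x) ^ (m - 1)"
    using z assms by (intro power_mono) auto
  then have "real m * z ^ (m - 1) \<le> real m * (2 ^ (m - 1) * x ^ (m - 1))"
    by (intro mult_left_mono) (auto simp: power_mult_distrib)
  then show ?thesis
    unfolding diff by (simp add: mult.assoc)
qed

lemma powr_Suc_diff_mvt:
  fixes x e :: real
  assumes "0 < x"
  obtains z where "x < z" "z < x + 1" "(x + 1) powr e - x powr e = e * z powr (e - 1)"
proof -
  have "\<And>y. x \<le> y \<Longrightarrow> ((\<lambda>z. z powr e) has_real_derivative e * y powr (e - 1)) (at y)"
    using assms by (intro has_real_derivative_powr) auto
  from MVT2[of x "x + 1", OF _ this] show ?thesis
    using that by auto
qed

lemma powr_Suc_diff_ge: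
  fixes x e :: real
  assumes "1 \<le> x" "0 < e"
  shows "e / 2 * x powr (e - 1) \<le> (x + 1) powr e - x powr e"
proof -
  obtain z where z: "x < z" "z < x + 1" and diff: "(x + 1) powr e - x powr e = e * z powr (e - 1)"
    using powr_Suc_diff_mvt[of x e] assms by auto
  have "x powr (e - 1) / 2 \<le> z powr (e - 1)"
  proof (cases "1 \<le> e")
    case True
    then have "x powr (e - 1) \<le> z powr (e - 1)"
      using z assms by (intro powr_mono2) auto
    then show ?thesis
      using powr_ge_zero[of x "e - 1"] by linarith
  next
    case False
    have "x powr (e - 1) / 2 = 2 powr (-1) * x powr (e - 1)"
      by (simp add: powr_minus_divide)
    also have "\<dots> \<le> 2 powr (e - 1) * x powr (e - 1)"
      using assms by (intro mult_right_mono powr_mono) auto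
    also have "\<dots> = (2 * x) powr (e - 1)"
      using assms by (simp add: powr_mult)
    also have "\<dots> \<le> z powr (e - 1)"
      using z assms False by (intro powr_mono2') auto
    finally show ?thesis .
  qed
  then show ?thesis
    unfolding diff using assms by (simp add: mult_left_mono)
qed

lemma powr_neg_diff_Suc_ge:
  fixes x b :: real
  assumes "1 \<le> x" "0 < b"
  shows "b * 2 powr (-b - 1) * x powr (-b - 1) \<le> x powr (-b) - (x + 1) powr (-b)"
proof -
  obtain z where z: "x < z" "z < x + 1" and diff: "(x + 1) powr (-b) - x powr (-b) = -b * z powr (-b - 1)"
    using powr_Suc_diff_mvt[of x "-b"] assms by auto
  have "2 powr (-b - 1) * x powr (-b - 1) = (2 * x) powr (-b - 1)"
    using assms by (simp add: powr_mult)
  also have "\<dots> \<le> z powr (-b - 1)"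
    using z assms by (intro powr_mono2') auto
  finally have "b * (2 powr (-b - 1) * x powr (-b - 1)) \<le> b * z powr (-b - 1)"
    using assms by (intro mult_left_mono) auto
  then show ?thesis
    using diff by (simp add: mult.assoc)
qed

lemma weighted_power_diff_le_below:
  fixes x r :: real
  assumes "1 \<le> x" "0 < m" "r < real m"
  shows "((x + 1) ^ m - x ^ m) * x powr (-r)
    \<le> real m * 2 ^ m / (real m - r) * ((x + 1) powr (real m - r) - x powr (real m - r))"
proof -
  define c where "c = real m - r"
  have c: "0 < c"
    using assms c_def by simp
  have "((x + 1) ^ m - x ^ m) * x powr (-r) \<le> real m * 2 ^ (m - 1) * x ^ (m - 1) * x powr (-r)"
    using power_Suc_diff_le[OF assms(1)] assms by (intro mult_right_mono) auto
  also have "\<dots> = real m * 2 ^ (m - 1) * x powr (c - 1)"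
    using assms by (simp add: c_def powr_realpow[symmetric] powr_add[symmetric] of_nat_diff; simp add: algebra_simps)
  also have "\<dots> \<le> real m * 2 ^ (m - 1) * (2 / c * ((x + 1) powr c - x powr c))"
    using powr_Suc_diff_ge[OF assms(1) c] c by (intro mult_left_mono) (auto simp: field_simps)
  also have "\<dots> = real m * 2 ^ m / c * ((x + 1) powr c - x powr c)"
    using assms by (cases m) (auto simp: field_simps)
  finally show ?thesis
    unfolding c_def .
qed

lemma weighted_power_diff_le_above:
  fixes x r :: real
  assumes "1 \<le> x" "0 < m" "real m < r"
  shows "((x + 1) ^ m - x ^ m) * x powr (-r)
    \<le> real m * 2 powr r / (r - real m) * (x powr (real m - r) - (x + 1) powr (real m - r))"
proof -
  define b where "b = r - real m"
  have b: "0 < b"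
    using assms b_def by simp
  have decay: "x powr (-b - 1) \<le> 2 powr (b + 1) / b * (x powr (-b) - (x + 1) powr (-b))"
  proof -
    have "2 powr (b + 1) * 2 powr (-b - 1) = 1"
      by (simp add: powr_add[symmetric])
    then have "x powr (-b - 1) = 2 powr (b + 1) / b * (b * 2 powr (-b - 1) * x powr (-b - 1))"
      using b by (simp add: field_simps)
    also have "\<dots> \<le> 2 powr (b + 1) / b * (x powr (-b) - (x + 1) powr (-b))"
      using powr_neg_diff_Suc_ge[OF assms(1) b] b by (intro mult_left_mono) auto
    finally show ?thesis .
  qed
  have "((x + 1) ^ m - x ^ m) * x powr (-r) \<le> real m * 2 ^ (m - 1) * x ^ (m - 1) * x powr (-r)"
    using power_Suc_diff_le[OF assms(1)] assms by (intro mult_right_mono) auto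
  also have "\<dots> = real m * 2 ^ (m - 1) * x powr (-b - 1)"
    using assms by (simp add: b_def powr_realpow[symmetric] powr_add[symmetric] of_nat_diff; simp add: algebra_simps)
  also have "\<dots> \<le> real m * 2 ^ (m - 1) * (2 powr (b + 1) / b * (x powr (-b) - (x + 1) powr (-b)))"
    by (rule mult_left_mono[OF decay]) simp
  also have "\<dots> = real m * 2 powr r / b * (x powr (-b) - (x + 1) powr (-b))"
    using assms by (simp add: b_def powr_realpow[symmetric] powr_add[symmetric] of_nat_diff; simp add: algebra_simps)
  finally show ?thesis
    by (simp add: b_def)
qed

lemma sum_weighted_power_diff_le_below:
  fixes T :: "nat \<Rightarrow> real" and r B :: real
  assumes "0 < m" "r < real m" "1 \<le> K" "K \<le> n" "0 \<le> B"
    and T: "\<And>k. K \<le> k \<Longrightarrow> T k \<le> B * real k powr (-r)"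
  shows "(\<Sum>k = K..<n. ((real k + 1) ^ m - real k ^ m) * T k)
    \<le> B * (real m * 2 ^ m / (real m - r)) * real n powr (real m - r)"
proof -
  define D where "D = real m * 2 ^ m / (real m - r)"
  have D: "0 \<le> D"
    using assms by (simp add: D_def)
  have "((real k + 1) ^ m - real k ^ m) * T k
      \<le> B * D * (real (Suc k) powr (real m - r) - real k powr (real m - r))" if "K \<le> k" for k
  proof -
    have "((real k + 1) ^ m - real k ^ m) * T k \<le> ((real k + 1) ^ m - real k ^ m) * (B * real k powr (-r))"
      using T that by (intro mult_left_mono) (auto intro: power_mono)
    also have "\<dots> \<le> B * (D * ((real k + 1) powr (real m - r) - real k powr (real m - r)))"
      using mult_left_mono[OF weighted_power_diff_le_below[of "real k" m r] \<open>0 \<le> B\<close>] assms that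
      unfolding D_def by (simp add: ac_simps)
    finally show ?thesis
      by (simp add: ac_simps)
  qed
  then have "(\<Sum>k = K..<n. ((real k + 1) ^ m - real k ^ m) * T k)
      \<le> (\<Sum>k = K..<n. B * D * (real (Suc k) powr (real m - r) - real k powr (real m - r)))"
    by (intro sum_mono) auto
  also have "\<dots> = B * D * (real n powr (real m - r) - real K powr (real m - r))"
    by (simp only: sum_distrib_left[symmetric] sum_Suc_diff'[OF \<open>K \<le> n\<close>, of "\<lambda>k. real k powr (real m - r)"])
  also have "\<dots> \<le> B * D * real n powr (real m - r)"
    using assms D by (intro mult_left_mono) auto
  finally show ?thesis
    unfolding D_def .
qed

lemma sum_weighted_power_diff_le_above:
  fixes T :: "nat \<Rightarrow> real" and r B :: real
  assumes "0 < m" "real m < r" "1 \<le> L" "0 \<le> B"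
    and T: "\<And>k. L \<le> k \<Longrightarrow> T k \<le> B * real k powr (-r)"
  shows "(\<Sum>k = L..<N. ((real k + 1) ^ m - real k ^ m) * T k)
    \<le> B * (real m * 2 powr r / (r - real m)) * real L powr (real m - r)"
proof (cases "L \<le> N")
  case True
  define D where "D = real m * 2 powr r / (r - real m)"
  have D: "0 \<le> D"
    using assms by (simp add: D_def)
  have "((real k + 1) ^ m - real k ^ m) * T k
      \<le> - (B * D * (real (Suc k) powr (real m - r) - real k powr (real m - r)))" if "L \<le> k" for k
  proof -
    have "((real k + 1) ^ m - real k ^ m) * T k \<le> ((real k + 1) ^ m - real k ^ m) * (B * real k powr (-r))"
      using T that by (intro mult_left_mono) (auto intro: power_mono)
    also have "\<dots> \<le> B * (D * (real k powr (real m - r) - (real k + 1) powr (real m - r)))"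
      using mult_left_mono[OF weighted_power_diff_le_above[of "real k" m r] \<open>0 \<le> B\<close>] assms that
      unfolding D_def by (simp add: ac_simps)
    finally show ?thesis
      by (simp add: algebra_simps)
  qed
  then have "(\<Sum>k = L..<N. ((real k + 1) ^ m - real k ^ m) * T k)
      \<le> (\<Sum>k = L..<N. - (B * D * (real (Suc k) powr (real m - r) - real k powr (real m - r))))"
    by (intro sum_mono) auto
  also have "\<dots> = B * D * (real L powr (real m - r) - real N powr (real m - r))"
    by (simp only: sum_negf sum_distrib_left[symmetric] sum_Suc_diff'[OF True, of "\<lambda>k. real k powr (real m - r)"])
      (simp add: algebra_simps)
  also have "\<dots> \<le> B * D * real L powr (real m - r)"
    using assms D by (intro mult_left_mono) auto
  finally show ?thesis
    unfolding D_def .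
next
  case False
  then show ?thesis
    using assms by simp
qed

lemma bigo_if_le_const_plus:
  fixes f g :: "'a \<Rightarrow> real"
  assumes "\<forall>\<^sub>F x in F. 0 \<le> f x" "\<forall>\<^sub>F x in F. f x \<le> A + C * g x" "filterlim g at_top F"
  shows "f \<in> O[F](g)"
proof (rule landau_o.bigI)
  show "0 < \<bar>A\<bar> + \<bar>C\<bar> + 1"
    by simp
  have "\<forall>\<^sub>F x in F. 1 \<le> g x"
    using assms(3) by (simp add: filterlim_at_top)
  with assms(1,2) show "\<forall>\<^sub>F x in F. norm (f x) \<le> (\<bar>A\<bar> + \<bar>C\<bar> + 1) * norm (g x)"
  proof eventually_elim
    case (elim x)
    have "\<bar>A\<bar> * 1 \<le> \<bar>A\<bar> * g x"
      using elim by (intro mult_left_mono) auto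
    then have "A \<le> \<bar>A\<bar> * g x"
      using abs_ge_self[of A] by linarith
    moreover have "C * g x \<le> \<bar>C\<bar> * g x"
      using elim by (intro mult_right_mono) auto
    ultimately have "f x \<le> (\<bar>A\<bar> + \<bar>C\<bar> + 1) * g x"
      using elim by (simp only: distrib_right mult_1_left)
    then show ?case
      using elim by simp
  qed
qed

lemma smallo_if_le_const_plus:
  fixes f g :: "'a \<Rightarrow> real"
  assumes "\<forall>\<^sub>F x in F. 0 \<le> f x" "\<And>\<epsilon>. 0 < \<epsilon> \<Longrightarrow> \<exists>A. \<forall>\<^sub>F x in F. f x \<le> A + \<epsilon> * g x"
    and "filterlim g at_top F"
  shows "f \<in> o[F](g)"
proof (rule landau_o.smallI)
  fix c :: real
  assume c: "0 < c"
  then obtain A where A: "\<forall>\<^sub>F x in F. f x \<le> A + c / 2 * g x"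
    using assms(2)[of "c / 2"] by auto
  have "\<forall>\<^sub>F x in F. max 0 (2 * A / c) \<le> g x"
    using assms(3) unfolding filterlim_at_top by blast
  with assms(1) A show "\<forall>\<^sub>F x in F. norm (f x) \<le> c * norm (g x)"
  proof eventually_elim
    case (elim x)
    then have "A \<le> c / 2 * g x"
      using c by (simp add: field_simps)
    then show ?case
      using elim by simp
  qed
qed

lemma nn_integral_le_suminf_diff_emeasure:
  fixes g :: "real \<Rightarrow> real" and X :: "'a \<Rightarrow> real"
  assumes X: "X \<in> borel_measurable M" "AE \<omega> in M. 0 \<le> X \<omega>"
    and g: "mono_on {0..} g" "g 0 = 0"
  shows "(\<integral>\<^sup>+\<omega>. ennreal (g (X \<omega>)) \<partial>M)
    \<le> (\<Sum>k. ennreal (g (real (Suc k)) - g (real k)) * emeasure M {\<omega> \<in> space M. real k \<le> X \<omega>})"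
proof -
  define A where "A k = {\<omega> \<in> space M. real k \<le> X \<omega>}" for k :: nat
  have A: "A k \<in> sets M" for k
    using X(1) unfolding A_def by measurable
  have g_diff: "0 \<le> g (real (Suc k)) - g (real k)" for k
    using mono_onD[OF g(1)] by simp
  have pointwise: "ennreal (g x) \<le> (\<Sum>k. ennreal (g (real (Suc k)) - g (real k)) * of_bool (real k \<le> x))"
    if "0 \<le> x" for x
  proof -
    define j where "j = nat \<lfloor>x\<rfloor>"
    have below: "real k \<le> x" if "k < Suc j" for k
      using that \<open>0 \<le> x\<close> unfolding j_def by linarith
    have "x \<le> real (Suc j)"
      using that unfolding j_def by linarith
    then have "g x \<le> g (real (Suc j))"
      using that by (intro mono_onD[OF g(1)]) auto
    also have "\<dots> = (\<Sum>k<Suc j. g (real (Suc k)) - g (real k))"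
      using sum_lessThan_telescope[of "\<lambda>k. g (real k)"] g(2) by simp
    finally have "ennreal (g x) \<le> ennreal (\<Sum>k<Suc j. g (real (Suc k)) - g (real k))"
      by (rule ennreal_leI)
    also have "\<dots> = (\<Sum>k<Suc j. ennreal (g (real (Suc k)) - g (real k)))"
      by (intro sum_ennreal[symmetric] g_diff)
    also have "\<dots> = (\<Sum>k<Suc j. ennreal (g (real (Suc k)) - g (real k)) * of_bool (real k \<le> x))"
      using below by (intro sum.cong) auto
    also have "\<dots> \<le> (\<Sum>k. ennreal (g (real (Suc k)) - g (real k)) * of_bool (real k \<le> x))"
      by (intro sum_le_suminf) auto
    finally show ?thesis .
  qed
  have "AE \<omega> in M. ennreal (g (X \<omega>)) \<le> (\<Sum>k. ennreal (g (real (Suc k)) - g (real k)) * indicator (A k) \<omega>)"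
    using X(2) AE_space
  proof eventually_elim
    case (elim \<omega>)
    then show ?case
      using pointwise[of "X \<omega>"] by (simp add: A_def indicator_def)
  qed
  then have "(\<integral>\<^sup>+\<omega>. ennreal (g (X \<omega>)) \<partial>M)
      \<le> (\<integral>\<^sup>+\<omega>. (\<Sum>k. ennreal (g (real (Suc k)) - g (real k)) * indicator (A k) \<omega>) \<partial>M)"
    by (rule nn_integral_mono_AE)
  also have "\<dots> = (\<Sum>k. ennreal (g (real (Suc k)) - g (real k)) * emeasure M (A k))"
    using A by (simp add: nn_integral_suminf nn_integral_cmult_indicator)
  finally show ?thesis
    unfolding A_def .
qed

definition moment_majorant :: "nat \<Rightarrow> real \<Rightarrow> real \<Rightarrow> real" where
  "moment_majorant p t x = min (x ^ (2 * p)) (t ^ p * x ^ p)"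

lemma power_div_le_moment_majorant:
  fixes x t :: real
  assumes "0 \<le> x" "0 < t"
  shows "x ^ (2 * p) / (x / t + 1) ^ p \<le> moment_majorant p t x"
proof -
  have denominator: "1 \<le> (x / t + 1) ^ p"
    using assms by (intro one_le_power) auto
  have "x ^ (2 * p) / (x / t + 1) ^ p \<le> x ^ (2 * p) / 1"
    using assms less_le_trans[OF zero_less_one denominator] by (intro divide_left_mono) auto
  moreover have "x ^ (2 * p) / (x / t + 1) ^ p = x ^ p * (x / (x / t + 1)) ^ p"
    by (simp add: power_divide mult_2 power_add)
  moreover have "\<dots> \<le> x ^ p * t ^ p"
    using assms by (intro mult_left_mono power_mono) (auto simp: field_simps)
  ultimately show ?thesis
    unfolding moment_majorant_def by (simp add: mult.commute)
qed

lemma moment_majorant_below: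
  fixes x t :: real
  assumes "0 \<le> x" "x \<le> t"
  shows "moment_majorant p t x = x ^ (2 * p)"
proof -
  have "x ^ p * x ^ p \<le> t ^ p * x ^ p"
    using assms by (intro mult_right_mono power_mono) auto
  then show ?thesis
    unfolding moment_majorant_def by (simp add: mult_2 power_add)
qed

lemma moment_majorant_above:
  fixes x t :: real
  assumes "0 \<le> t" "t \<le> x"
  shows "moment_majorant p t x = t ^ p * x ^ p"
proof -
  have "t ^ p * x ^ p \<le> x ^ p * x ^ p"
    using assms by (intro mult_right_mono power_mono) auto
  then show ?thesis
    unfolding moment_majorant_def by (simp add: mult_2 power_add)
qed

lemma mono_on_moment_majorant: "0 \<le> t \<Longrightarrow> mono_on {0..} (moment_majorant p t)"
  unfolding moment_majorant_def by (intro mono_onI min.mono mult_left_mono power_mono) auto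

lemma moment_majorant_0: "0 < p \<Longrightarrow> moment_majorant p t 0 = 0"
  by (simp add: moment_majorant_def power_0_left)

text \<open>The two constants are those of \<open>weighted_power_diff_le_below\<close> with \<open>m = 2p\<close> and of
  \<open>weighted_power_diff_le_above\<close> with \<open>m = p\<close>.\<close>
definition moment_const :: "nat \<Rightarrow> real \<Rightarrow> real" where
  "moment_const p r = real (2 * p) * 2 ^ (2 * p) / (real (2 * p) - r) + real p * 2 powr r / (r - real p)"

lemma moment_const_pos: "real p < r \<Longrightarrow> r < 2 * real p \<Longrightarrow> 0 < moment_const p r"
  unfolding moment_const_def by (intro add_pos_pos divide_pos_pos mult_pos_pos) auto

lemma sum_moment_majorant_diff_le:
  fixes T :: "nat \<Rightarrow> real" and r B :: real
  assumes r: "real p < r" "r < 2 * real p" and K: "1 \<le> K" "K \<le> n" and "0 \<le> B"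
    and T: "\<And>k. 0 \<le> T k" "\<And>k. T k \<le> 1" "\<And>k. K \<le> k \<Longrightarrow> T k \<le> B * real k powr (-r)"
  shows "(\<Sum>k<N. (moment_majorant p (real n) (real (Suc k)) - moment_majorant p (real n) (real k)) * T k)
    \<le> real K ^ (2 * p) + B * moment_const p r * real n powr (2 * real p - r)"
proof -
  define g where "g = moment_majorant p (real n)"
  define a where "a k = (g (real (Suc k)) - g (real k)) * T k" for k
  have p: "0 < p"
    using r by simp
  have g_diff: "0 \<le> g (real (Suc k)) - g (real k)" for k
    using mono_onD[OF mono_on_moment_majorant[of "real n" p]] unfolding g_def by simp
  define N' where "N' = max N n"
  have "(\<Sum>k<N. a k) \<le> (\<Sum>k<N'. a k)"
    using g_diff T(1) by (intro sum_mono2) (auto simp: N'_def a_def)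
  also have "\<dots> = (\<Sum>k = 0..<K. a k) + (\<Sum>k = K..<n. a k) + (\<Sum>k = n..<N'. a k)"
    using K by (simp add: N'_def lessThan_atLeast0 sum.atLeastLessThan_concat)
  finally have split: "(\<Sum>k<N. a k) \<le> (\<Sum>k = 0..<K. a k) + (\<Sum>k = K..<n. a k) + (\<Sum>k = n..<N'. a k)" .
  have "(\<Sum>k = 0..<K. a k) \<le> (\<Sum>k = 0..<K. g (real (Suc k)) - g (real k))"
    using g_diff T by (intro sum_mono) (auto simp: a_def mult_left_le)
  also have "\<dots> = g (real K)"
    using sum_Suc_diff'[of 0 K "\<lambda>k. g (real k)"] moment_majorant_0[OF p] by (simp add: g_def)
  also have "\<dots> \<le> real K ^ (2 * p)"
    by (simp add: g_def moment_majorant_def)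
  finally have low: "(\<Sum>k = 0..<K. a k) \<le> real K ^ (2 * p)" .
  have "(\<Sum>k = K..<n. a k) = (\<Sum>k = K..<n. ((real k + 1) ^ (2 * p) - real k ^ (2 * p)) * T k)"
    by (intro sum.cong) (auto simp: a_def g_def moment_majorant_below add.commute)
  also have "\<dots> \<le> B * (real (2 * p) * 2 ^ (2 * p) / (real (2 * p) - r)) * real n powr (real (2 * p) - r)"
    using assms by (intro sum_weighted_power_diff_le_below) auto
  finally have mid: "(\<Sum>k = K..<n. a k)
      \<le> B * (real (2 * p) * 2 ^ (2 * p) / (real (2 * p) - r)) * real n powr (2 * real p - r)"
    by simp
  have "(\<Sum>k = n..<N'. a k) = real n ^ p * (\<Sum>k = n..<N'. ((real k + 1) ^ p - real k ^ p) * T k)"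
    unfolding sum_distrib_left
    by (intro sum.cong) (auto simp: a_def g_def moment_majorant_above algebra_simps)
  also have "\<dots> \<le> real n ^ p * (B * (real p * 2 powr r / (r - real p)) * real n powr (real p - r))"
    using assms by (intro mult_left_mono sum_weighted_power_diff_le_above) auto
  also have "\<dots> = B * (real p * 2 powr r / (r - real p)) * real n powr (2 * real p - r)"
    using K by (simp add: powr_realpow[symmetric] powr_add[symmetric])
  finally have high: "(\<Sum>k = n..<N'. a k) \<le> B * (real p * 2 powr r / (r - real p)) * real n powr (2 * real p - r)" .
  show ?thesis
    using split low mid high unfolding a_def g_def moment_const_def by (simp add: algebra_simps)
qed

lemma expectation_moment_ratio_le:
  fixes M :: "'a measure" and X :: "'a \<Rightarrow> real" and r B :: real
  assumes M: "prob_space M" and X: "X \<in> borel_measurable M" "AE \<omega> in M. 0 \<le> X \<omega>"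
    and r: "real p < r" "r < 2 * real p" and K: "1 \<le> K" "K \<le> n" and "0 \<le> B"
    and tail: "\<And>k. K \<le> k \<Longrightarrow> measure M {\<omega> \<in> space M. real k \<le> X \<omega>} \<le> B * real k powr (-r)"
  shows "prob_space.expectation M (\<lambda>\<omega>. X \<omega> ^ (2 * p) / (X \<omega> / real n + 1) ^ p)
    \<le> real K ^ (2 * p) + B * moment_const p r * real n powr (2 * real p - r)" (is "_ \<le> ?bound")
proof -
  interpret prob_space M
    by (rule M)
  define T where "T k = measure M {\<omega> \<in> space M. real k \<le> X \<omega>}" for k :: nat
  define g where "g = moment_majorant p (real n)"
  have g_diff: "0 \<le> g (real (Suc k)) - g (real k)" for k
    using mono_onD[OF mono_on_moment_majorant[of "real n" p]] unfolding g_def by simp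
  have "(\<integral>\<^sup>+\<omega>. ennreal (X \<omega> ^ (2 * p) / (X \<omega> / real n + 1) ^ p) \<partial>M) \<le> (\<integral>\<^sup>+\<omega>. ennreal (g (X \<omega>)) \<partial>M)"
    using X(2) K unfolding g_def
    by (intro nn_integral_mono_AE) (auto elim!: eventually_mono intro!: ennreal_leI power_div_le_moment_majorant)
  also have "\<dots> \<le> (\<Sum>k. ennreal (g (real (Suc k)) - g (real k)) * emeasure M {\<omega> \<in> space M. real k \<le> X \<omega>})"
    using X mono_on_moment_majorant moment_majorant_0 r unfolding g_def
    by (intro nn_integral_le_suminf_diff_emeasure) auto
  also have "\<dots> = (\<Sum>k. ennreal ((g (real (Suc k)) - g (real k)) * T k))"
    using g_diff by (simp add: T_def emeasure_eq_measure ennreal_mult)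
  also have "\<dots> \<le> ennreal ?bound"
  proof (rule suminf_le_const)
    fix N
    have "(\<Sum>k<N. ennreal ((g (real (Suc k)) - g (real k)) * T k))
        = ennreal (\<Sum>k<N. (g (real (Suc k)) - g (real k)) * T k)"
      using g_diff by (intro sum_ennreal) (simp add: T_def)
    also have "\<dots> \<le> ennreal ?bound"
      using r K \<open>0 \<le> B\<close> tail unfolding g_def
      by (intro ennreal_leI sum_moment_majorant_diff_le) (auto simp: T_def)
    finally show "(\<Sum>k<N. ennreal ((g (real (Suc k)) - g (real k)) * T k)) \<le> ennreal ?bound" .
  qed simp
  finally show ?thesis
    using moment_const_pos[OF r] \<open>0 \<le> B\<close> by (intro integral_real_bounded) auto
qed

lemma expectation_moment_ratio_eventually_le:
  fixes M :: "'a measure" and X :: "'a \<Rightarrow> real" and r B :: real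
  assumes M: "prob_space M" and X: "X \<in> borel_measurable M" "AE \<omega> in M. 0 \<le> X \<omega>"
    and r: "real p < r" "r < 2 * real p" and "0 \<le> B"
    and tail: "\<forall>\<^sub>F x in at_top. measure M {\<omega> \<in> space M. X \<omega> \<ge> x} \<le> B * x powr (-r)"
  shows "\<exists>A. \<forall>\<^sub>F n in at_top. prob_space.expectation M (\<lambda>\<omega>. X \<omega> ^ (2 * p) / (X \<omega> / real n + 1) ^ p)
    \<le> A + B * moment_const p r * real n powr (2 * real p - r)"
proof -
  obtain x0 where x0: "\<And>x. x0 \<le> x \<Longrightarrow> measure M {\<omega> \<in> space M. X \<omega> \<ge> x} \<le> B * x powr (-r)"
    using tail by (auto simp: eventually_at_top_linorder)
  define K where "K = max 1 (nat \<lceil>x0\<rceil>)"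
  have "measure M {\<omega> \<in> space M. real k \<le> X \<omega>} \<le> B * real k powr (-r)" if "K \<le> k" for k
    using that unfolding K_def by (intro x0) linarith
  then have "\<forall>n\<ge>K. prob_space.expectation M (\<lambda>\<omega>. X \<omega> ^ (2 * p) / (X \<omega> / real n + 1) ^ p)
      \<le> real K ^ (2 * p) + B * moment_const p r * real n powr (2 * real p - r)"
    using \<open>0 \<le> B\<close> by (auto intro!: expectation_moment_ratio_le[OF M X r] simp: K_def)
  then show ?thesis
    by (auto simp: eventually_at_top_linorder)
qed

lemma expectation_moment_ratio_bigo:
  fixes M :: "'a measure" and X :: "'a \<Rightarrow> real" and r :: real
  assumes M: "prob_space M" and X: "X \<in> borel_measurable M" "AE \<omega> in M. 0 \<le> X \<omega>"
    and r: "real p < r" "r < 2 * real p"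
    and tail: "(\<lambda>x. measure M {\<omega> \<in> space M. X \<omega> \<ge> x}) \<in> O[at_top](\<lambda>x. x powr (-r))"
  shows "(\<lambda>n. prob_space.expectation M (\<lambda>\<omega>. X \<omega> ^ (2 * p) / (X \<omega> / real n + 1) ^ p))
    \<in> O[at_top](\<lambda>n. real n powr (2 * real p - r))"
proof -
  obtain C where "0 < C"
    and "\<forall>\<^sub>F x in at_top. norm (measure M {\<omega> \<in> space M. X \<omega> \<ge> x}) \<le> C * norm (x powr (-r))"
    using tail by (auto elim: landau_o.bigE)
  then have "\<forall>\<^sub>F x in at_top. measure M {\<omega> \<in> space M. X \<omega> \<ge> x} \<le> C * x powr (-r)"
    by (auto elim: eventually_mono)
  then obtain A where "\<forall>\<^sub>F n in at_top. prob_space.expectation M (\<lambda>\<omega>. X \<omega> ^ (2 * p) / (X \<omega> / real n + 1) ^ p)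
      \<le> A + C * moment_const p r * real n powr (2 * real p - r)"
    using expectation_moment_ratio_eventually_le[OF M X r] \<open>0 < C\<close> by fastforce
  moreover have "\<forall>\<^sub>F n in at_top. 0 \<le> prob_space.expectation M (\<lambda>\<omega>. X \<omega> ^ (2 * p) / (X \<omega> / real n + 1) ^ p)"
    by (intro always_eventually allI, rule integral_nonneg_AE) (use X(2) in \<open>auto elim!: eventually_mono\<close>)
  moreover have "filterlim (\<lambda>n. real n powr (2 * real p - r)) at_top at_top"
    using r by (intro filterlim_compose[OF real_powr_at_top filterlim_real_sequentially]) simp
  ultimately show ?thesis
    by (intro bigo_if_le_const_plus)
qed

lemma expectation_moment_ratio_smallo:
  fixes M :: "'a measure" and X :: "'a \<Rightarrow> real" and r :: real
  assumes M: "prob_space M" and X: "X \<in> borel_measurable M" "AE \<omega> in M. 0 \<le> X \<omega>"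
    and r: "real p < r" "r < 2 * real p"
    and tail: "(\<lambda>x. measure M {\<omega> \<in> space M. X \<omega> \<ge> x}) \<in> o[at_top](\<lambda>x. x powr (-r))"
  shows "(\<lambda>n. prob_space.expectation M (\<lambda>\<omega>. X \<omega> ^ (2 * p) / (X \<omega> / real n + 1) ^ p))
    \<in> o[at_top](\<lambda>n. real n powr (2 * real p - r))"
proof (rule smallo_if_le_const_plus)
  fix \<epsilon> :: real
  assume "0 < \<epsilon>"
  define B where "B = \<epsilon> / moment_const p r"
  have B: "0 < B" "B * moment_const p r = \<epsilon>"
    using \<open>0 < \<epsilon>\<close> moment_const_pos[OF r] by (simp_all add: B_def)
  have "\<forall>\<^sub>F x in at_top. norm (measure M {\<omega> \<in> space M. X \<omega> \<ge> x}) \<le> B * norm (x powr (-r))"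
    using landau_o.smallD[OF tail B(1)] .
  then have "\<forall>\<^sub>F x in at_top. measure M {\<omega> \<in> space M. X \<omega> \<ge> x} \<le> B * x powr (-r)"
    by (auto elim: eventually_mono)
  then show "\<exists>A. \<forall>\<^sub>F n in at_top. prob_space.expectation M (\<lambda>\<omega>. X \<omega> ^ (2 * p) / (X \<omega> / real n + 1) ^ p)
      \<le> A + \<epsilon> * real n powr (2 * real p - r)"
    using expectation_moment_ratio_eventually_le[OF M X r] B by fastforce
next
  show "\<forall>\<^sub>F n in at_top. 0 \<le> prob_space.expectation M (\<lambda>\<omega>. X \<omega> ^ (2 * p) / (X \<omega> / real n + 1) ^ p)"
    by (intro always_eventually allI, rule integral_nonneg_AE) (use X(2) in \<open>auto elim!: eventually_mono\<close>)
  show "filterlim (\<lambda>n. real n powr (2 * real p - r)) at_top at_top"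
    using r by (intro filterlim_compose[OF real_powr_at_top filterlim_real_sequentially]) simp
qed

theorem lemma5:
  fixes M :: "'a measure" and X :: "'a \<Rightarrow> real" and p :: nat
  assumes "prob_space M"
    and "X \<in> borel_measurable M"
    and "AE \<omega> in M. X \<omega> > 0"
    and "integrable M X" and "prob_space.expectation M X = 1"
    and "p \<ge> 2"
  shows "((\<lambda>x::real. measure M {\<omega> \<in> space M. X \<omega> \<ge> x}) \<in> o[at_top](\<lambda>x. x powr (- (real p + 1)))
           \<longrightarrow> (\<lambda>n::nat. prob_space.expectation M (\<lambda>\<omega>. X \<omega> ^ (2*p) / (X \<omega> / real n + 1) ^ p))
                 \<in> o[at_top](\<lambda>n. real n ^ (p - 1)))
       \<and> (\<forall>q::real. real p < q \<and> q < 2 * real p \<and>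
           (\<lambda>x::real. measure M {\<omega> \<in> space M. X \<omega> \<ge> x}) \<in> O[at_top](\<lambda>x. x powr (- q))
           \<longrightarrow> (\<lambda>n::nat. prob_space.expectation M (\<lambda>\<omega>. X \<omega> ^ (2*p) / (X \<omega> / real n + 1) ^ p))
                 \<in> O[at_top](\<lambda>n. real n powr (2 * real p - q)))"
proof (intro conjI impI allI)
  have X_nonneg: "AE \<omega> in M. 0 \<le> X \<omega>"
    using assms(3) by (auto elim: eventually_mono)
  have powr_eq: "real n powr (2 * real p - (real p + 1)) = real n ^ (p - 1)" for n :: nat
    using assms(6) by (cases "n = 0") (auto simp: powr_realpow[symmetric] of_nat_diff)
  assume "(\<lambda>x. measure M {\<omega> \<in> space M. X \<omega> \<ge> x}) \<in> o[at_top](\<lambda>x. x powr (- (real p + 1)))"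
  then have "(\<lambda>n. prob_space.expectation M (\<lambda>\<omega>. X \<omega> ^ (2 * p) / (X \<omega> / real n + 1) ^ p))
      \<in> o[at_top](\<lambda>n. real n powr (2 * real p - (real p + 1)))"
    using assms(6) by (intro expectation_moment_ratio_smallo[OF assms(1,2) X_nonneg]) auto
  then show "(\<lambda>n. prob_space.expectation M (\<lambda>\<omega>. X \<omega> ^ (2 * p) / (X \<omega> / real n + 1) ^ p))
      \<in> o[at_top](\<lambda>n. real n ^ (p - 1))"
    unfolding powr_eq .
next
  fix q :: real
  assume "real p < q \<and> q < 2 * real p \<and>
    (\<lambda>x. measure M {\<omega> \<in> space M. X \<omega> \<ge> x}) \<in> O[at_top](\<lambda>x. x powr (- q))"
  then show "(\<lambda>n. prob_space.expectation M (\<lambda>\<omega>. X \<omega> ^ (2 * p) / (X \<omega> / real n + 1) ^ p))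
      \<in> O[at_top](\<lambda>n. real n powr (2 * real p - q))"
    using assms(1,2,3) by (intro expectation_moment_ratio_bigo) (auto elim: eventually_mono)
qed

end
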